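(* Let $\overrightarrow{W}$ be a Morse sequence on a simplicial complex $K$, with reference map $\curlywedge$ and coreference map $\curlyvee$. (1) If $z,z'\in Z_p(K)$ and $\curlywedge(z)=\curlywedge(z')$, then $z+z'\in B_p(K)$, i.e. $z$ and $z'$ are homologous. (2) If $z,z'\in Z^p(K)$ and $\curlyvee(z)=\curlyvee(z')$, then $z+z'\in B^p(K)$, i.e. $z$ and $z'$ are cohomologous.
   Context: A simplicial complex $K$ is a finite collection of non-empty finite sets closed under taking non-empty subsets; $\dim\sigma=|\sigma|-1$, $K^{(p)}$ the set of $p$-simplices. A pair $(\sigma,\tau)$ with $\sigma\subsetneq\tau$ is a free pair for $K$ if $\tau$ is the only simplex other than $\sigma$ containing $\sigma$; $K$ is then an elementary expansion of $K\setminus\{\sigma,\tau\}$. If $\nu$ is a facet (maximal simplex) of $K$, $K$ is an elementary filling of $K\setminus\{\nu\}$. A Morse sequence on $K$ is a sequence $\langle\emptyset=K_0,\dots,K_k=K\rangle$ with each $K_i$ an elementary expansion or filling of $K_{i-1}$; simplices added by fillings are critical; for an expansion $K_i=K_{i-1}\cup\{\sigma,\tau\}$, $\sigma\subset\tau$, $\sigma$ is lower regular and $\tau$ upper regular. $K[p]$ is the $\mathbb{Z}_2$-vector space of subsets of $K^{(p)}$ (sum = symmetric difference, $0=\emptyset$). For $\sigma\in K^{(p)}$, $\partial(\sigma)=\{\tau\in K^{(p-1)}:\tau\subset\sigma\}$, $\delta(\sigma)=\{\tau\in K^{(p+1)}:\sigma\subset\tau\}$, extended linearly to $\partial_p:K[p]\to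 K[p-1]$, $\delta_p:K[p]\to K[p+1]$; $Z_p(K)=\ker\partial_p$, $B_p(K)=\operatorname{im}\partial_{p+1}$, $Z^p(K)=\ker\delta_p$, $B^p(K)=\operatorname{im}\delta_{p-1}$. The reference map $\curlywedge$ is the unique map assigning to each $p$-simplex a set of critical $p$-simplices, extended linearly (mod 2), with $\curlywedge(\nu)=\{\nu\}$ for critical $\nu$ and $\curlywedge(\tau)=0=\curlywedge(\partial(\tau))$ for upper regular $\tau$; the coreference map $\curlyvee$ is the unique such map with $\curlyvee(\nu)=\{\nu\}$ for critical $\nu$ and $\curlyvee(\sigma)=0=\curlyvee(\delta(\sigma))$ for lower regular $\sigma$. *)

theory Defs
  imports Main
begin

definition simplicial_complex :: "'a set set \<Rightarrow> bool" where
  "simplicial_complex K \<longleftrightarrow> finite K \<and>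
     (\<forall>\<sigma>\<in>K. finite \<sigma> \<and> \<sigma> \<noteq> {} \<and> (\<forall>\<tau>. \<tau> \<subseteq> \<sigma> \<and> \<tau> \<noteq> {} \<longrightarrow> \<tau> \<in> K))"

definition simplices :: "'a set set \<Rightarrow> nat \<Rightarrow> 'a set set" where
  "simplices K p = {\<sigma>\<in>K. card \<sigma> = p + 1}"

definition free_pair :: "'a set set \<Rightarrow> 'a set \<Rightarrow> 'a set \<Rightarrow> bool" where
  "free_pair K \<sigma> \<tau> \<longleftrightarrow> \<sigma> \<subset> \<tau> \<and> \<sigma> \<in> K \<and> \<tau> \<in> K \<and>
     (\<forall>\<nu>\<in>K. \<sigma> \<subseteq> \<nu> \<and> \<nu> \<noteq> \<sigma> \<longrightarrow> \<nu> = \<tau>)"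

definition facet :: "'a set set \<Rightarrow> 'a set \<Rightarrow> bool" where
  "facet K \<nu> \<longleftrightarrow> \<nu> \<in> K \<and> (\<forall>\<mu>\<in>K. \<nu> \<subseteq> \<mu> \<longrightarrow> \<mu> = \<nu>)"

definition elem_expansion :: "'a set set \<Rightarrow> 'a set set \<Rightarrow> bool" where
  "elem_expansion K' L \<longleftrightarrow> (\<exists>\<sigma> \<tau>. free_pair K' \<sigma> \<tau> \<and> L = K' - {\<sigma>, \<tau>})"

definition elem_filling :: "'a set set \<Rightarrow> 'a set set \<Rightarrow> bool" where
  "elem_filling K' L \<longleftrightarrow> (\<exists>\<nu>. facet K' \<nu> \<and> L = K' - {\<nu>})"

definition morse_seq :: "'a set set \<Rightarrow> 'a set set list \<Rightarrow> bool" where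
  "morse_seq K W \<longleftrightarrow> W \<noteq> [] \<and> W ! 0 = {} \<and> last W = K \<and>
     (\<forall>i. 0 < i \<and> i < length W \<longrightarrow>
        elem_expansion (W ! i) (W ! (i - 1)) \<or> elem_filling (W ! i) (W ! (i - 1)))"

definition critical :: "'a set set list \<Rightarrow> 'a set \<Rightarrow> bool" where
  "critical W \<nu> \<longleftrightarrow> (\<exists>i. 0 < i \<and> i < length W \<and> facet (W ! i) \<nu> \<and> W ! (i - 1) = W ! i - {\<nu>})"

definition lower_regular :: "'a set set list \<Rightarrow> 'a set \<Rightarrow> bool" where
  "lower_regular W \<sigma> \<longleftrightarrow> (\<exists>i \<tau>. 0 < i \<and> i < length W \<and> free_pair (W ! i) \<sigma> \<tau> \<and>
        W ! (i - 1) = W ! i - {\<sigma>, \<tau>})"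

definition upper_regular :: "'a set set list \<Rightarrow> 'a set \<Rightarrow> bool" where
  "upper_regular W \<tau> \<longleftrightarrow> (\<exists>i \<sigma>. 0 < i \<and> i < length W \<and> free_pair (W ! i) \<sigma> \<tau> \<and>
        W ! (i - 1) = W ! i - {\<sigma>, \<tau>})"

section \<open>Chains over Z_2 (a p-chain is a subset of the p-simplices)\<close>

text \<open>Boundary of a p-chain c (a (p-1)-chain; empty for p = 0).\<close>
definition bd :: "'a set set \<Rightarrow> nat \<Rightarrow> 'a set set \<Rightarrow> 'a set set" where
  "bd K p c = {\<tau>\<in>K. card \<tau> = p \<and> odd (card {\<sigma>\<in>c. \<tau> \<subset> \<sigma>})}"

definition cobd :: "'a set set \<Rightarrow> nat \<Rightarrow> 'a set set \<Rightarrow> 'a set set" where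
  "cobd K p c = {\<tau>\<in>K. card \<tau> = p + 2 \<and> odd (card {\<sigma>\<in>c. \<sigma> \<subset> \<tau>})}"

definition cycles :: "'a set set \<Rightarrow> nat \<Rightarrow> 'a set set set" where
  "cycles K p = {z. z \<subseteq> simplices K p \<and> bd K p z = {}}"

definition boundaries :: "'a set set \<Rightarrow> nat \<Rightarrow> 'a set set set" where
  "boundaries K p = {bd K (p + 1) c | c. c \<subseteq> simplices K (p + 1)}"

definition cocycles :: "'a set set \<Rightarrow> nat \<Rightarrow> 'a set set set" where
  "cocycles K p = {z. z \<subseteq> simplices K p \<and> cobd K p z = {}}"

text \<open>B^0 = image of delta_(-1) : K[-1] = 0 \<rightarrow> K[0], i.e. the zero space.\<close>
definition coboundaries :: "'a set set \<Rightarrow> nat \<Rightarrow> 'a set set set" where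
  "coboundaries K p = (if p = 0 then {{}}
      else {cobd K (p - 1) c | c. c \<subseteq> simplices K (p - 1)})"

text \<open>Linear (mod 2) extension of a map on simplices to chains.\<close>
definition lin_ext :: "('a set \<Rightarrow> 'a set set) \<Rightarrow> 'a set set \<Rightarrow> 'a set set" where
  "lin_ext f c = {\<nu>. odd (card {\<sigma>\<in>c. \<nu> \<in> f \<sigma>})}"

definition chain_add :: "'b set \<Rightarrow> 'b set \<Rightarrow> 'b set" where
  "chain_add A B = (A - B) \<union> (B - A)"

definition is_reference_map :: "'a set set \<Rightarrow> 'a set set list \<Rightarrow> ('a set \<Rightarrow> 'a set set) \<Rightarrow> bool" where
  "is_reference_map K W f \<longleftrightarrow>
     (\<forall>p. \<forall>\<sigma>\<in>simplices K p. f \<sigma> \<subseteq> {\<nu>\<in>simplices K p. critical W \<nu>}) \<and>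
     (\<forall>\<nu>\<in>K. critical W \<nu> \<longrightarrow> f \<nu> = {\<nu>}) \<and>
     (\<forall>\<tau>\<in>K. upper_regular W \<tau> \<longrightarrow>
        f \<tau> = {} \<and> lin_ext f (bd K (card \<tau> - 1) {\<tau>}) = {})"

definition is_coreference_map :: "'a set set \<Rightarrow> 'a set set list \<Rightarrow> ('a set \<Rightarrow> 'a set set) \<Rightarrow> bool" where
  "is_coreference_map K W f \<longleftrightarrow>
     (\<forall>p. \<forall>\<sigma>\<in>simplices K p. f \<sigma> \<subseteq> {\<nu>\<in>simplices K p. critical W \<nu>}) \<and>
     (\<forall>\<nu>\<in>K. critical W \<nu> \<longrightarrow> f \<nu> = {\<nu>}) \<and>
     (\<forall>\<sigma>\<in>K. lower_regular W \<sigma> \<longrightarrow>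
        f \<sigma> = {} \<and> lin_ext f (cobd K (card \<sigma> - 1) {\<sigma>}) = {})"

end

theory Submission
  imports Defs
begin

text \<open>
  Along the Morse sequence \<open>{} = K\<^sub>0 \<subseteq> \<dots> \<subseteq> K\<^sub>k = K\<close>, the reference of a simplex of
  \<open>K\<^sub>i\<close> stays inside \<open>K\<^sub>i\<close>. So a cycle \<open>z \<subseteq> K\<^sub>i\<close> with vanishing reference cannot contain the
  critical facet \<open>\<nu>\<close> added at step \<open>i\<close> (it would survive in the reference of \<open>z\<close>), nor the upper
  simplex of the free pair \<open>(\<sigma>, \<tau>)\<close> added at step \<open>i\<close> (then \<open>\<sigma> \<in> \<partial>z\<close>); if it contains \<open>\<sigma>\<close>,
  then \<open>z + \<partial>\<tau>\<close> is a homologous cycle inside \<open>K\<^sub>i\<^sub>-\<^sub>1\<close>, again with vanishing reference since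
  the reference of \<open>\<partial>\<tau>\<close> vanishes. Descending to \<open>K\<^sub>0\<close>, every such cycle is a boundary.

  Cohomology is dual, running the sequence backwards: the coreference of a simplex outside \<open>K\<^sub>i\<close>
  avoids \<open>K\<^sub>i\<close>, and a cocycle with vanishing coreference supported outside \<open>K\<^sub>i\<close> is
  cohomologous, via \<open>z + \<delta>\<sigma>\<close>, to one supported outside \<open>K\<^sub>i\<^sub>+\<^sub>1\<close>; outside \<open>K\<^sub>k = K\<close> only
  \<open>0\<close> is left.
\<close>

lemma mem_chain_add: "x \<in> chain_add A B \<longleftrightarrow> (x \<in> A) \<noteq> (x \<in> B)"
  unfolding chain_add_def by blast

lemma chain_add_self [simp]: "chain_add A A = {}"
  unfolding chain_add_def by blast

lemma chain_add_cancel_left: "chain_add A (chain_add A B) = B"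
  unfolding chain_add_def by blast

lemma chain_add_cancel_right: "chain_add (chain_add A B) B = A"
  unfolding chain_add_def by blast

lemma chain_add_subset: "A \<subseteq> C \<Longrightarrow> B \<subseteq> C \<Longrightarrow> chain_add A B \<subseteq> C"
  unfolding chain_add_def by blast

lemma odd_card_filter_chain_add:
  assumes "finite A" "finite B"
  shows "odd (card {x \<in> chain_add A B. P x}) \<longleftrightarrow> odd (card {x \<in> A. P x}) \<noteq> odd (card {x \<in> B. P x})"
proof -
  define A' B' where "A' = {x \<in> A. P x}" and "B' = {x \<in> B. P x}"
  have fin: "finite A'" "finite B'" using assms by (simp_all add: A'_def B'_def)
  have "{x \<in> chain_add A B. P x} = (A' - B') \<union> (B' - A')"
    unfolding A'_def B'_def chain_add_def by blast
  then have "card {x \<in> chain_add A B. P x} = card (A' - B') + card (B' - A')"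
    using fin by (simp add: card_Un_disjoint Diff_Int_distrib2 Int_Diff)
  moreover have "card (A' - B') + card (A' \<inter> B') = card A'"
    using fin card_Int_Diff[of A' B'] by simp
  moreover have "card (B' - A') + card (A' \<inter> B') = card B'"
    using fin card_Int_Diff[of B' A'] by (simp add: Int_commute)
  ultimately show ?thesis unfolding A'_def B'_def by presburger
qed

lemma odd_card_filter_unique:
  assumes "a \<in> c" "P a" "\<And>s. s \<in> c \<Longrightarrow> P s \<Longrightarrow> s = a"
  shows "odd (card {s \<in> c. P s})"
proof -
  have "{s \<in> c. P s} = {a}" using assms by blast
  then show ?thesis by simp
qed

lemma bd_chain_add:
  "finite A \<Longrightarrow> finite B \<Longrightarrow> bd K p (chain_add A B) = chain_add (bd K p A) (bd K p B)"
  unfolding bd_def by (simp add: odd_card_filter_chain_add) (auto simp: mem_chain_add)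

lemma cobd_chain_add:
  "finite A \<Longrightarrow> finite B \<Longrightarrow> cobd K p (chain_add A B) = chain_add (cobd K p A) (cobd K p B)"
  unfolding cobd_def by (simp add: odd_card_filter_chain_add) (auto simp: mem_chain_add)

lemma lin_ext_chain_add:
  "finite A \<Longrightarrow> finite B \<Longrightarrow> lin_ext f (chain_add A B) = chain_add (lin_ext f A) (lin_ext f B)"
  unfolding lin_ext_def by (simp add: odd_card_filter_chain_add) (auto simp: mem_chain_add)

lemma bd_singleton: "bd K q {\<tau>} = {\<rho> \<in> K. card \<rho> = q \<and> \<rho> \<subset> \<tau>}"
  unfolding bd_def by (auto simp: Collect_conv_if)

lemma cobd_singleton: "cobd K q {\<sigma>} = {\<rho> \<in> K. card \<rho> = q + 2 \<and> \<sigma> \<subset> \<rho>}"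
  unfolding cobd_def by (auto simp: Collect_conv_if)

lemma finite_simplices_subset: "finite K \<Longrightarrow> A \<subseteq> simplices K p \<Longrightarrow> finite A"
  unfolding simplices_def by (auto intro: finite_subset)

lemma cycles_chain_add:
  "finite K \<Longrightarrow> z \<in> cycles K p \<Longrightarrow> z' \<in> cycles K p \<Longrightarrow> chain_add z z' \<in> cycles K p"
  unfolding cycles_def by (clarsimp simp: bd_chain_add finite_simplices_subset chain_add_subset)

lemma cocycles_chain_add:
  "finite K \<Longrightarrow> z \<in> cocycles K p \<Longrightarrow> z' \<in> cocycles K p \<Longrightarrow> chain_add z z' \<in> cocycles K p"
  unfolding cocycles_def by (clarsimp simp: cobd_chain_add finite_simplices_subset chain_add_subset)

lemma boundaries_chain_add:
  assumes "finite K" "z \<in> boundaries K p" "z' \<in> boundaries K p"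
  shows "chain_add z z' \<in> boundaries K p"
proof -
  obtain c c' where c: "z = bd K (p + 1) c" "c \<subseteq> simplices K (p + 1)"
    and c': "z' = bd K (p + 1) c'" "c' \<subseteq> simplices K (p + 1)"
    using assms(2,3) unfolding boundaries_def by blast
  then have "chain_add z z' = bd K (p + 1) (chain_add c c')"
    using assms(1) by (simp add: bd_chain_add finite_simplices_subset)
  moreover have "chain_add c c' \<subseteq> simplices K (p + 1)"
    using c(2) c'(2) by (rule chain_add_subset)
  ultimately show ?thesis unfolding boundaries_def by blast
qed

lemma coboundaries_chain_add:
  assumes "finite K" "z \<in> coboundaries K p" "z' \<in> coboundaries K p"
  shows "chain_add z z' \<in> coboundaries K p"
proof (cases p)
  case 0
  then show ?thesis using assms(2,3) unfolding coboundaries_def by simp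
next
  case (Suc q)
  obtain c c' where c: "z = cobd K q c" "c \<subseteq> simplices K q"
    and c': "z' = cobd K q c'" "c' \<subseteq> simplices K q"
    using assms(2,3) Suc unfolding coboundaries_def by auto
  then have "chain_add z z' = cobd K q (chain_add c c')"
    using assms(1) by (simp add: cobd_chain_add finite_simplices_subset)
  moreover have "chain_add c c' \<subseteq> simplices K q"
    using c(2) c'(2) by (rule chain_add_subset)
  ultimately show ?thesis unfolding coboundaries_def using Suc by auto
qed

lemma bd_singleton_in_boundaries: "\<tau> \<in> simplices K (p + 1) \<Longrightarrow> bd K (p + 1) {\<tau>} \<in> boundaries K p"
  unfolding boundaries_def by blast

lemma cobd_singleton_in_coboundaries: "\<sigma> \<in> simplices K q \<Longrightarrow> cobd K q {\<sigma>} \<in> coboundaries K (Suc q)"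
  unfolding coboundaries_def by auto

lemma empty_in_boundaries: "{} \<in> boundaries K p"
  unfolding boundaries_def by (auto intro!: exI[of _ "{}"] simp: bd_def)

lemma empty_in_coboundaries: "{} \<in> coboundaries K p"
  unfolding coboundaries_def by (auto intro!: exI[of _ "{}"] simp: cobd_def)

lemma simplicial_complex_face:
  "simplicial_complex L \<Longrightarrow> \<tau> \<in> L \<Longrightarrow> \<rho> \<subseteq> \<tau> \<Longrightarrow> \<rho> \<noteq> {} \<Longrightarrow> \<rho> \<in> L"
  unfolding simplicial_complex_def by blast

lemma simplicial_complex_simplex:
  "simplicial_complex L \<Longrightarrow> \<tau> \<in> L \<Longrightarrow> finite \<tau> \<and> \<tau> \<noteq> {}"
  unfolding simplicial_complex_def by blast

lemma free_pair_card:
  assumes "simplicial_complex L" "free_pair L \<sigma> \<tau>"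
  shows "card \<tau> = Suc (card \<sigma>)"
proof -
  have pair: "\<sigma> \<subset> \<tau>" "\<sigma> \<in> L" "\<tau> \<in> L" "\<And>\<nu>. \<nu> \<in> L \<Longrightarrow> \<sigma> \<subseteq> \<nu> \<Longrightarrow> \<nu> \<noteq> \<sigma> \<Longrightarrow> \<nu> = \<tau>"
    using assms(2) unfolding free_pair_def by blast+
  obtain x where x: "x \<in> \<tau>" "x \<notin> \<sigma>"
    using psubset_imp_ex_mem[OF pair(1)] by blast
  have "insert x \<sigma> \<in> L"
    using simplicial_complex_face[OF assms(1) pair(3)] pair(1) x by auto
  then have "insert x \<sigma> = \<tau>"
    using pair(4) x by auto
  moreover have "finite \<sigma>"
    using simplicial_complex_simplex[OF assms(1) pair(2)] by blast
  ultimately show ?thesis using x by auto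
qed

lemma simplicial_complex_Diff_upward_closed:
  assumes "simplicial_complex L" and up: "\<And>\<rho> \<mu>. \<rho> \<in> L \<Longrightarrow> \<mu> \<in> R \<Longrightarrow> \<mu> \<subseteq> \<rho> \<Longrightarrow> \<rho> \<in> R"
  shows "simplicial_complex (L - R)"
  unfolding simplicial_complex_def
proof (intro conjI ballI allI impI)
  show "finite (L - R)"
    using assms(1) unfolding simplicial_complex_def by blast
next
  fix \<rho> \<mu> assume \<rho>: "\<rho> \<in> L - R" and \<mu>: "\<mu> \<subseteq> \<rho> \<and> \<mu> \<noteq> {}"
  then show "\<mu> \<in> L - R"
    using simplicial_complex_face[OF assms(1)] up by blast
qed (use simplicial_complex_simplex[OF assms(1)] in blast)+

lemma simplicial_complex_Diff_facet:
  assumes "simplicial_complex L" "facet L \<nu>"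
  shows "simplicial_complex (L - {\<nu>})"
proof (rule simplicial_complex_Diff_upward_closed[OF assms(1)])
  fix \<rho> \<mu> assume "\<rho> \<in> L" "\<mu> \<in> {\<nu>}" "\<mu> \<subseteq> \<rho>"
  then show "\<rho> \<in> {\<nu>}" using assms(2) unfolding facet_def by blast
qed

lemma simplicial_complex_Diff_free_pair:
  assumes "simplicial_complex L" "free_pair L \<sigma> \<tau>"
  shows "simplicial_complex (L - {\<sigma>, \<tau>})"
proof (rule simplicial_complex_Diff_upward_closed[OF assms(1)])
  fix \<rho> \<mu> assume "\<rho> \<in> L" "\<mu> \<in> {\<sigma>, \<tau>}" "\<mu> \<subseteq> \<rho>"
  moreover have "\<sigma> \<subseteq> \<tau>" using assms(2) unfolding free_pair_def by blast
  ultimately have "\<rho> \<in> L" "\<sigma> \<subseteq> \<rho>" by blast+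
  then show "\<rho> \<in> {\<sigma>, \<tau>}" using assms(2) unfolding free_pair_def by blast
qed

lemma card_strict_interval_eq_2:
  assumes "finite T" "S \<subseteq> T" "card T = card S + 2"
  shows "card {R. S \<subset> R \<and> R \<subset> T} = 2"
proof -
  have "card (T - S) = 2"
    using assms by (simp add: card_Diff_subset finite_subset)
  then obtain x y where xy: "T - S = {x, y}" "x \<noteq> y"
    by (auto simp: card_2_iff)
  have "R = insert x S \<or> R = insert y S" if "S \<subset> R" "R \<subset> T" for R
  proof -
    have "R - S \<subseteq> {x, y}" "R - S \<noteq> {}" "R - S \<noteq> {x, y}"
      using that xy(1) by blast+
    then have "R - S = {x} \<or> R - S = {y}" by blast
    then show ?thesis using that(1) by blast
  qed
  moreover have "S \<subset> insert z S \<and> insert z S \<subset> T" if "z \<in> {x, y}" for z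
    using that xy assms(2) by (auto simp: psubset_eq)
  ultimately have "{R. S \<subset> R \<and> R \<subset> T} = {insert x S, insert y S}"
    by blast
  moreover have "insert x S \<noteq> insert y S"
    using xy by blast
  ultimately show ?thesis by simp
qed

lemma even_card_intermediate_faces:
  assumes "simplicial_complex K" "T \<in> K" "card T = card S + 2"
  shows "even (card {R \<in> K. card R = card S + 1 \<and> S \<subset> R \<and> R \<subset> T})"
proof (cases "S \<subseteq> T")
  case True
  have fin: "finite T" using simplicial_complex_simplex[OF assms(1,2)] by blast
  have "{R \<in> K. card R = card S + 1 \<and> S \<subset> R \<and> R \<subset> T} = {R. S \<subset> R \<and> R \<subset> T}"
  proof (intro set_eqI iffI)
    fix R assume R: "R \<in> {R. S \<subset> R \<and> R \<subset> T}"
    then have "card S < card R" "card R < card T"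
      using fin by (auto intro: psubset_card_mono finite_subset)
    moreover have "R \<in> K"
      using simplicial_complex_face[OF assms(1,2)] R by blast
    ultimately show "R \<in> {R \<in> K. card R = card S + 1 \<and> S \<subset> R \<and> R \<subset> T}"
      using R assms(3) by simp
  qed blast
  then show ?thesis
    using card_strict_interval_eq_2[OF fin True assms(3)] by simp
next
  case False
  then have "{R \<in> K. card R = card S + 1 \<and> S \<subset> R \<and> R \<subset> T} = {}" by blast
  then show ?thesis by (metis card.empty even_zero)
qed

lemma bd_bd_singleton:
  assumes "simplicial_complex K" "\<tau> \<in> K" "card \<tau> = p + 2"
  shows "bd K p (bd K (p + 1) {\<tau>}) = {}"
proof -
  have "even (card {\<rho> \<in> bd K (p + 1) {\<tau>}. \<mu> \<subset> \<rho>})" if "card \<mu> = p" for \<mu>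
  proof -
    have "{\<rho> \<in> bd K (p + 1) {\<tau>}. \<mu> \<subset> \<rho>}
        = {R \<in> K. card R = card \<mu> + 1 \<and> \<mu> \<subset> R \<and> R \<subset> \<tau>}"
      using that by (auto simp: bd_singleton)
    then show ?thesis
      using even_card_intermediate_faces[OF assms(1,2), of \<mu>] that assms(3) by simp
  qed
  then show ?thesis unfolding bd_def[of K p] by auto
qed

lemma cobd_cobd_singleton:
  assumes "simplicial_complex K" "card \<sigma> = q + 1"
  shows "cobd K (q + 1) (cobd K q {\<sigma>}) = {}"
proof -
  have "even (card {\<rho> \<in> cobd K q {\<sigma>}. \<rho> \<subset> \<mu>})" if "\<mu> \<in> K" "card \<mu> = q + 3" for \<mu>
  proof -
    have "{\<rho> \<in> cobd K q {\<sigma>}. \<rho> \<subset> \<mu>}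
        = {R \<in> K. card R = card \<sigma> + 1 \<and> \<sigma> \<subset> R \<and> R \<subset> \<mu>}"
      using assms(2) by (auto simp: cobd_singleton)
    then show ?thesis
      using even_card_intermediate_faces[OF assms(1) that(1), of \<sigma>] that(2) assms(2) by simp
  qed
  then show ?thesis unfolding cobd_def[of K "q + 1"] by auto
qed

lemma bd_singleton_in_cycles:
  assumes "simplicial_complex K" "\<tau> \<in> simplices K (p + 1)"
  shows "bd K (p + 1) {\<tau>} \<in> cycles K p"
proof -
  have "\<tau> \<in> K" "card \<tau> = p + 2" using assms(2) unfolding simplices_def by auto
  then show ?thesis
    unfolding cycles_def using bd_bd_singleton[OF assms(1)]
    by (auto simp: bd_singleton simplices_def)
qed

lemma cobd_singleton_in_cocycles:
  assumes "simplicial_complex K" "\<sigma> \<in> simplices K q"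
  shows "cobd K q {\<sigma>} \<in> cocycles K (Suc q)"
proof -
  have "card \<sigma> = q + 1" using assms(2) unfolding simplices_def by auto
  then show ?thesis
    unfolding cocycles_def using cobd_cobd_singleton[OF assms(1)]
    by (auto simp: cobd_singleton simplices_def)
qed

lemma free_face_mem_bd:
  assumes "free_pair L \<sigma> \<tau>" "w \<subseteq> L" "\<tau> \<in> w" "\<sigma> \<in> K" "card \<sigma> = p"
  shows "\<sigma> \<in> bd K p w"
proof -
  have "odd (card {\<rho> \<in> w. \<sigma> \<subset> \<rho>})"
  proof (rule odd_card_filter_unique[of \<tau>])
    show "\<tau> \<in> w" "\<sigma> \<subset> \<tau>" using assms(1,3) unfolding free_pair_def by blast+
    show "\<rho> = \<tau>" if "\<rho> \<in> w" "\<sigma> \<subset> \<rho>" for \<rho>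
      using assms(1,2) that unfolding free_pair_def by blast
  qed
  then show ?thesis using assms(4,5) unfolding bd_def by simp
qed

lemma free_coface_mem_cobd:
  assumes "simplicial_complex L" "free_pair L \<sigma> \<tau>" "w \<subseteq> simplices K p"
    "w \<inter> (L - {\<sigma>, \<tau>}) = {}" "\<sigma> \<in> w" "\<tau> \<in> K" "card \<tau> = p + 2"
  shows "\<tau> \<in> cobd K p w"
proof -
  have "odd (card {\<rho> \<in> w. \<rho> \<subset> \<tau>})"
  proof (rule odd_card_filter_unique[of \<sigma>])
    show "\<sigma> \<in> w" "\<sigma> \<subset> \<tau>" using assms(2,5) unfolding free_pair_def by blast+
    fix \<rho> assume \<rho>: "\<rho> \<in> w" "\<rho> \<subset> \<tau>"
    have "\<tau> \<in> L" using assms(2) unfolding free_pair_def by blast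
    moreover have "\<rho> \<noteq> {}" using \<rho>(1) assms(3) unfolding simplices_def by auto
    ultimately have "\<rho> \<in> L" using simplicial_complex_face[OF assms(1)] \<rho>(2) by blast
    then show "\<rho> = \<sigma>" using \<rho> assms(4) by blast
  qed
  then show ?thesis using assms(6,7) unfolding cobd_def by simp
qed

locale morse_sequence =
  fixes K :: "'a set set" and W :: "'a set set list"
  assumes complex: "simplicial_complex K" and sequence: "morse_seq K W"
begin

lemma finite_complex: "finite K"
  using complex unfolding simplicial_complex_def by blast

lemma length_pos: "0 < length W"
  using sequence unfolding morse_seq_def by blast

lemma stage_first: "W ! 0 = {}"
  using sequence unfolding morse_seq_def by blast

lemma stage_last: "W ! (length W - 1) = K"
  using sequence unfolding morse_seq_def by (metis One_nat_def last_conv_nth)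

lemma morse_step_cases:
  assumes "Suc i < length W"
  obtains (expansion) \<sigma> \<tau> where "free_pair (W ! Suc i) \<sigma> \<tau>" "W ! i = W ! Suc i - {\<sigma>, \<tau>}"
      "lower_regular W \<sigma>" "upper_regular W \<tau>"
  | (filling) \<nu> where "facet (W ! Suc i) \<nu>" "W ! i = W ! Suc i - {\<nu>}" "critical W \<nu>"
proof -
  have step: "elem_expansion (W ! Suc i) (W ! i) \<or> elem_filling (W ! Suc i) (W ! i)"
    using sequence assms unfolding morse_seq_def by (metis diff_Suc_1 zero_less_Suc)
  show thesis
  proof (cases "elem_expansion (W ! Suc i) (W ! i)")
    case True
    then obtain \<sigma> \<tau> where "free_pair (W ! Suc i) \<sigma> \<tau>" "W ! i = W ! Suc i - {\<sigma>, \<tau>}"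
      unfolding elem_expansion_def by blast
    moreover from this have "lower_regular W \<sigma>" "upper_regular W \<tau>"
      using assms unfolding lower_regular_def upper_regular_def by (metis diff_Suc_1 zero_less_Suc)+
    ultimately show thesis by (rule expansion)
  next
    case False
    then obtain \<nu> where "facet (W ! Suc i) \<nu>" "W ! i = W ! Suc i - {\<nu>}"
      using step unfolding elem_filling_def by blast
    moreover from this have "critical W \<nu>"
      using assms unfolding critical_def by (metis diff_Suc_1 zero_less_Suc)
    ultimately show thesis by (rule filling)
  qed
qed

lemma stage_subset_Suc: "Suc i < length W \<Longrightarrow> W ! i \<subseteq> W ! Suc i"
  by (cases rule: morse_step_cases) auto

lemma stage_subset_complex:
  assumes "i < length W"
  shows "W ! i \<subseteq> K"
proof -
  have "i \<le> length W - 1" using assms by simp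
  then show ?thesis
  proof (induction rule: inc_induct)
    case base
    then show ?case using stage_last by simp
  next
    case (step n)
    then have "Suc n < length W" by simp
    then show ?case using step.IH stage_subset_Suc[of n] by simp
  qed
qed

lemma simplicial_complex_stage:
  assumes "i < length W"
  shows "simplicial_complex (W ! i)"
proof -
  have "i \<le> length W - 1" using assms by simp
  then show ?thesis
  proof (induction rule: inc_induct)
    case base
    then show ?case using stage_last complex by simp
  next
    case (step n)
    then have "Suc n < length W" by simp
    then show ?case using step.IH
      by (cases rule: morse_step_cases)
        (simp_all add: simplicial_complex_Diff_facet simplicial_complex_Diff_free_pair)
  qed
qed

lemma free_pair_stage:
  assumes "i < length W" "free_pair (W ! i) \<sigma> \<tau>"
  shows "\<sigma> \<in> K" "\<tau> \<in> K" "\<sigma> \<subset> \<tau>" "card \<tau> = Suc (card \<sigma>)"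
proof -
  show "\<sigma> \<in> K" "\<tau> \<in> K" "\<sigma> \<subset> \<tau>"
    using assms(2) stage_subset_complex[OF assms(1)] unfolding free_pair_def by blast+
  show "card \<tau> = Suc (card \<sigma>)"
    using free_pair_card[OF simplicial_complex_stage[OF assms(1)] assms(2)] .
qed

lemma card_simplex_pos: "\<sigma> \<in> K \<Longrightarrow> 0 < card \<sigma>"
  using simplicial_complex_simplex[OF complex] by (simp add: card_gt_0_iff)

lemma free_coface_notin_cycle:
  assumes i: "Suc i < length W" and pair: "free_pair (W ! Suc i) \<sigma> \<tau>"
    and w: "w \<in> cycles K p" "w \<subseteq> W ! Suc i"
  shows "\<tau> \<notin> w"
proof
  assume "\<tau> \<in> w"
  then have "card \<sigma> = p"
    using free_pair_stage(4)[OF i pair] w(1) unfolding cycles_def simplices_def by auto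
  then have "\<sigma> \<in> bd K p w"
    using free_face_mem_bd[OF pair w(2) \<open>\<tau> \<in> w\<close> free_pair_stage(1)[OF i pair]] by simp
  then show False using w(1) unfolding cycles_def by simp
qed

lemma free_face_notin_cocycle:
  assumes i: "Suc i < length W" and pair: "free_pair (W ! Suc i) \<sigma> \<tau>"
    and stage: "W ! i = W ! Suc i - {\<sigma>, \<tau>}" and w: "w \<in> cocycles K p" "w \<inter> W ! i = {}"
  shows "\<sigma> \<notin> w"
proof
  assume "\<sigma> \<in> w"
  have w_simplices: "w \<subseteq> simplices K p" using w(1) unfolding cocycles_def by blast
  then have "card \<tau> = p + 2"
    using free_pair_stage(4)[OF i pair] \<open>\<sigma> \<in> w\<close> unfolding simplices_def by auto
  then have "\<tau> \<in> cobd K p w"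
    using free_coface_mem_cobd[OF simplicial_complex_stage[OF i] pair w_simplices]
      w(2) stage \<open>\<sigma> \<in> w\<close> free_pair_stage(2)[OF i pair] by simp
  then show False using w(1) unfolding cocycles_def by simp
qed

lemma bd_free_coface_support:
  assumes i: "Suc i < length W" and pair: "free_pair (W ! Suc i) \<sigma> \<tau>"
    and stage: "W ! i = W ! Suc i - {\<sigma>, \<tau>}" and \<tau>: "\<tau> \<in> simplices K (p + 1)"
    and w: "w \<subseteq> W ! Suc i" "\<sigma> \<in> w" "\<tau> \<notin> w"
  shows "chain_add w (bd K (p + 1) {\<tau>}) \<subseteq> W ! i"
proof -
  have "\<rho> \<in> W ! Suc i" if "\<rho> \<in> bd K (p + 1) {\<tau>}" for \<rho>
  proof -
    have "\<rho> \<in> K" "\<rho> \<subset> \<tau>" using that by (auto simp: bd_singleton)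
    moreover have "\<tau> \<in> W ! Suc i" using pair unfolding free_pair_def by blast
    ultimately show ?thesis
      using simplicial_complex_face[OF simplicial_complex_stage[OF i]]
        simplicial_complex_simplex[OF complex] by blast
  qed
  moreover have "\<sigma> \<in> bd K (p + 1) {\<tau>}"
    using free_pair_stage[OF i pair] \<tau> unfolding simplices_def by (simp add: bd_singleton)
  moreover have "\<tau> \<notin> bd K (p + 1) {\<tau>}" by (simp add: bd_singleton)
  ultimately show ?thesis
    using w stage unfolding chain_add_def by blast
qed

lemma cobd_free_face_support:
  assumes i: "Suc i < length W" and pair: "free_pair (W ! Suc i) \<sigma> \<tau>"
    and stage: "W ! i = W ! Suc i - {\<sigma>, \<tau>}" and \<sigma>: "\<sigma> \<in> simplices K q"
    and w: "w \<inter> W ! i = {}" "\<sigma> \<notin> w" "\<tau> \<in> w"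
  shows "chain_add w (cobd K q {\<sigma>}) \<inter> W ! Suc i = {}"
proof -
  have "\<tau> \<in> W ! Suc i" using pair unfolding free_pair_def by blast
  then have w_new: "w \<inter> W ! Suc i = {\<tau>}"
    using w stage by blast
  have "\<rho> = \<tau>" if "\<rho> \<in> cobd K q {\<sigma>}" "\<rho> \<in> W ! Suc i" for \<rho>
  proof -
    have "\<sigma> \<subset> \<rho>" using that(1) by (simp add: cobd_singleton)
    then show ?thesis using that(2) pair unfolding free_pair_def by blast
  qed
  moreover have "\<tau> \<in> cobd K q {\<sigma>}"
    using free_pair_stage[OF i pair] \<sigma> unfolding simplices_def by (simp add: cobd_singleton)
  ultimately have "cobd K q {\<sigma>} \<inter> W ! Suc i = {\<tau>}"
    using \<open>\<tau> \<in> W ! Suc i\<close> by blast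
  with w_new show ?thesis
    unfolding chain_add_def by blast
qed

context
  fixes f :: "'a set \<Rightarrow> 'a set set"
  assumes reference: "is_reference_map K W f"
begin

lemma reference_critical: "\<nu> \<in> K \<Longrightarrow> critical W \<nu> \<Longrightarrow> f \<nu> = {\<nu>}"
  using reference unfolding is_reference_map_def by blast

lemma reference_upper_regular:
  assumes "\<tau> \<in> K" "upper_regular W \<tau>"
  shows "f \<tau> = {}" "lin_ext f (bd K (card \<tau> - 1) {\<tau>}) = {}"
  using reference assms unfolding is_reference_map_def by blast+

lemma reference_free_face_in_stage:
  assumes i: "Suc i < length W" and pair: "free_pair (W ! Suc i) \<sigma> \<tau>"
    and stage: "W ! i = W ! Suc i - {\<sigma>, \<tau>}" and "upper_regular W \<tau>"
    and IH: "\<And>\<rho>. \<rho> \<in> W ! i \<Longrightarrow> f \<rho> \<subseteq> W ! i"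
  shows "f \<sigma> \<subseteq> W ! Suc i"
proof
  fix x assume x: "x \<in> f \<sigma>"
  show "x \<in> W ! Suc i"
  proof (rule ccontr)
    assume x_new: "x \<notin> W ! Suc i"
    note \<sigma>\<tau> = free_pair_stage[OF i pair]
    have "odd (card {\<rho> \<in> bd K (card \<tau> - 1) {\<tau>}. x \<in> f \<rho>})"
    proof (rule odd_card_filter_unique[of \<sigma>])
      show "\<sigma> \<in> bd K (card \<tau> - 1) {\<tau>}"
        using \<sigma>\<tau> by (simp add: bd_singleton)
    next
      fix \<rho> assume \<rho>: "\<rho> \<in> bd K (card \<tau> - 1) {\<tau>}" "x \<in> f \<rho>"
      then have "\<rho> \<in> K" "\<rho> \<subset> \<tau>" by (auto simp: bd_singleton)
      have "\<tau> \<in> W ! Suc i" using pair unfolding free_pair_def by blast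
      moreover have "\<rho> \<noteq> {}" using simplicial_complex_simplex[OF complex \<open>\<rho> \<in> K\<close>] by blast
      ultimately have "\<rho> \<in> W ! Suc i"
        using simplicial_complex_face[OF simplicial_complex_stage[OF i]] \<open>\<rho> \<subset> \<tau>\<close> by blast
      moreover have "\<rho> \<noteq> \<tau>" using \<open>\<rho> \<subset> \<tau>\<close> by blast
      moreover have "\<rho> \<notin> W ! i"
        using IH \<rho>(2) x_new stage_subset_Suc[OF i] by blast
      ultimately show "\<rho> = \<sigma>" using stage by blast
    qed (rule x)
    then show False
      using reference_upper_regular[OF \<sigma>\<tau>(2) assms(4)] unfolding lin_ext_def by auto
  qed
qed

lemma reference_in_stage: "i < length W \<Longrightarrow> \<rho> \<in> W ! i \<Longrightarrow> f \<rho> \<subseteq> W ! i"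
proof (induction i arbitrary: \<rho>)
  case 0
  then show ?case using stage_first by simp
next
  case (Suc i)
  note IH = Suc.IH[OF Suc_lessD[OF Suc.prems(1)]]
  have old: "f \<rho> \<subseteq> W ! Suc i" if "\<rho> \<in> W ! i"
    using IH[OF that] stage_subset_Suc[OF Suc.prems(1)] by blast
  show ?case
    using Suc.prems(1)
  proof (cases rule: morse_step_cases)
    case (expansion \<sigma> \<tau>)
    then consider "\<rho> \<in> W ! i" | "\<rho> = \<sigma>" | "\<rho> = \<tau>"
      using Suc.prems(2) by blast
    then show ?thesis
      using old reference_free_face_in_stage[OF Suc.prems(1) expansion(1,2,4) IH]
        reference_upper_regular(1)[OF free_pair_stage(2)[OF Suc.prems(1) expansion(1)] expansion(4)]
      by cases simp_all
  next
    case (filling \<nu>)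
    then have "\<nu> \<in> W ! Suc i" unfolding facet_def by blast
    then have "f \<nu> \<subseteq> W ! Suc i"
      using reference_critical stage_subset_complex[OF Suc.prems(1)] filling(3) by auto
    then show ?thesis
      using old filling(2) Suc.prems(2) by blast
  qed
qed

lemma reference_kernel_avoids_critical_facet:
  assumes i: "Suc i < length W" and stage: "W ! i = W ! Suc i - {\<nu>}"
    and \<nu>: "\<nu> \<in> K" "critical W \<nu>" and w: "w \<subseteq> W ! Suc i" "lin_ext f w = {}"
  shows "\<nu> \<notin> w"
proof
  assume "\<nu> \<in> w"
  have "odd (card {\<rho> \<in> w. \<nu> \<in> f \<rho>})"
  proof (rule odd_card_filter_unique[of \<nu>])
    show "\<nu> \<in> f \<nu>" using reference_critical[OF \<nu>] by simp
  next
    fix \<rho> assume \<rho>: "\<rho> \<in> w" "\<nu> \<in> f \<rho>"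
    show "\<rho> = \<nu>"
    proof (rule ccontr)
      assume "\<rho> \<noteq> \<nu>"
      then have "\<rho> \<in> W ! i" using \<rho>(1) w(1) stage by blast
      then have "f \<rho> \<subseteq> W ! i" using reference_in_stage i by simp
      then show False using \<rho>(2) stage by blast
    qed
  qed fact
  then show False using w(2) unfolding lin_ext_def by auto
qed

lemma cycle_add_bd_upper_regular:
  assumes w: "w \<in> cycles K p" "lin_ext f w = {}"
    and \<tau>: "\<tau> \<in> simplices K (p + 1)" "upper_regular W \<tau>"
  shows "chain_add w (bd K (p + 1) {\<tau>}) \<in> cycles K p"
    and "lin_ext f (chain_add w (bd K (p + 1) {\<tau>})) = {}"
proof -
  have bd\<tau>: "bd K (p + 1) {\<tau>} \<in> cycles K p"
    using bd_singleton_in_cycles[OF complex \<tau>(1)] .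
  then show "chain_add w (bd K (p + 1) {\<tau>}) \<in> cycles K p"
    using cycles_chain_add[OF finite_complex w(1)] by blast
  have "lin_ext f (bd K (p + 1) {\<tau>}) = {}"
    using reference_upper_regular(2)[of \<tau>] \<tau> unfolding simplices_def by simp
  moreover have "finite w" "finite (bd K (p + 1) {\<tau>})"
    using w(1) bd\<tau> finite_simplices_subset[OF finite_complex] unfolding cycles_def by blast+
  ultimately show "lin_ext f (chain_add w (bd K (p + 1) {\<tau>})) = {}"
    using w(2) by (simp add: lin_ext_chain_add)
qed

lemma cycle_homologous_in_previous_stage:
  assumes i: "Suc i < length W" and w: "w \<in> cycles K p" "lin_ext f w = {}" "w \<subseteq> W ! Suc i"
  obtains w' where "w' \<in> cycles K p" "lin_ext f w' = {}" "w' \<subseteq> W ! i"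
    "chain_add w w' \<in> boundaries K p"
  using i
proof (cases rule: morse_step_cases)
  case (filling \<nu>)
  have "\<nu> \<in> K" using filling(1) stage_subset_complex[OF i] unfolding facet_def by blast
  then have "w \<subseteq> W ! i"
    using reference_kernel_avoids_critical_facet[OF i filling(2) _ filling(3) w(3,2)] w(3) filling(2)
    by blast
  then show thesis using w(1,2) by (intro that[of w]) (simp_all add: empty_in_boundaries)
next
  case (expansion \<sigma> \<tau>)
  note \<sigma>\<tau> = free_pair_stage[OF i expansion(1)]
  have "\<tau> \<notin> w" using free_coface_notin_cycle[OF i expansion(1) w(1,3)] .
  show thesis
  proof (cases "\<sigma> \<in> w")
    case False
    then have "w \<subseteq> W ! i" using w(3) expansion(2) \<open>\<tau> \<notin> w\<close> by blast
    then show thesis using w(1,2) by (intro that[of w]) (simp_all add: empty_in_boundaries)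
  next
    case True
    then have \<tau>: "\<tau> \<in> simplices K (p + 1)"
      using \<sigma>\<tau> w(1) unfolding cycles_def simplices_def by auto
    have "chain_add w (bd K (p + 1) {\<tau>}) \<subseteq> W ! i"
      using bd_free_coface_support[OF i expansion(1,2) \<tau> w(3) True \<open>\<tau> \<notin> w\<close>] .
    then show thesis
      using that cycle_add_bd_upper_regular[OF w(1,2) \<tau> expansion(4)]
        bd_singleton_in_boundaries[OF \<tau>] by (simp add: chain_add_cancel_left)
  qed
qed

lemma cycle_in_stage_is_boundary:
  "i < length W \<Longrightarrow> w \<in> cycles K p \<Longrightarrow> lin_ext f w = {} \<Longrightarrow> w \<subseteq> W ! i \<Longrightarrow> w \<in> boundaries K p"
proof (induction i arbitrary: w)
  case 0
  then show ?case using stage_first empty_in_boundaries by simp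
next
  case (Suc i)
  obtain w' where w': "w' \<in> cycles K p" "lin_ext f w' = {}" "w' \<subseteq> W ! i"
    and homologous: "chain_add w w' \<in> boundaries K p"
    using cycle_homologous_in_previous_stage[OF Suc.prems] .
  have "w' \<in> boundaries K p" using Suc.IH[OF _ w'] Suc.prems(1) by simp
  with homologous show ?case
    using boundaries_chain_add[OF finite_complex] chain_add_cancel_right by metis
qed

lemma cycles_with_equal_reference_homologous:
  assumes "z \<in> cycles K p" "z' \<in> cycles K p" "lin_ext f z = lin_ext f z'"
  shows "chain_add z z' \<in> boundaries K p"
proof (rule cycle_in_stage_is_boundary)
  show "chain_add z z' \<in> cycles K p"
    using cycles_chain_add[OF finite_complex assms(1,2)] .
  then show "chain_add z z' \<subseteq> W ! (length W - 1)"
    using stage_last unfolding cycles_def simplices_def by auto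
  have "finite z" "finite z'"
    using assms(1,2) finite_simplices_subset[OF finite_complex] unfolding cycles_def by blast+
  then show "lin_ext f (chain_add z z') = {}"
    using assms(3) by (simp add: lin_ext_chain_add)
qed (use length_pos in simp)

end

context
  fixes f :: "'a set \<Rightarrow> 'a set set"
  assumes coreference: "is_coreference_map K W f"
begin

lemma coreference_critical: "\<nu> \<in> K \<Longrightarrow> critical W \<nu> \<Longrightarrow> f \<nu> = {\<nu>}"
  using coreference unfolding is_coreference_map_def by blast

lemma coreference_lower_regular:
  assumes "\<sigma> \<in> K" "lower_regular W \<sigma>"
  shows "f \<sigma> = {}" "lin_ext f (cobd K (card \<sigma> - 1) {\<sigma>}) = {}"
  using coreference assms unfolding is_coreference_map_def by blast+

lemma coreference_free_coface_disjoint: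
  assumes i: "Suc i < length W" and pair: "free_pair (W ! Suc i) \<sigma> \<tau>"
    and stage: "W ! i = W ! Suc i - {\<sigma>, \<tau>}" and "lower_regular W \<sigma>"
    and IH: "\<And>\<rho>. \<rho> \<in> K \<Longrightarrow> \<rho> \<notin> W ! Suc i \<Longrightarrow> f \<rho> \<inter> W ! Suc i = {}"
  shows "f \<tau> \<inter> W ! i = {}"
proof (rule ccontr)
  assume "f \<tau> \<inter> W ! i \<noteq> {}"
  then obtain x where x: "x \<in> f \<tau>" "x \<in> W ! i" by blast
  note \<sigma>\<tau> = free_pair_stage[OF i pair]
  have "odd (card {\<rho> \<in> cobd K (card \<sigma> - 1) {\<sigma>}. x \<in> f \<rho>})"
  proof (rule odd_card_filter_unique[of \<tau>])
    show "\<tau> \<in> cobd K (card \<sigma> - 1) {\<sigma>}"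
      using \<sigma>\<tau> card_simplex_pos[OF \<sigma>\<tau>(1)] by (simp add: cobd_singleton)
  next
    fix \<rho> assume \<rho>: "\<rho> \<in> cobd K (card \<sigma> - 1) {\<sigma>}" "x \<in> f \<rho>"
    then have "\<rho> \<in> K" "\<sigma> \<subset> \<rho>" by (auto simp: cobd_singleton)
    show "\<rho> = \<tau>"
    proof (rule ccontr)
      assume "\<rho> \<noteq> \<tau>"
      then have "\<rho> \<notin> W ! Suc i" using pair \<open>\<sigma> \<subset> \<rho>\<close> unfolding free_pair_def by blast
      then have "f \<rho> \<inter> W ! Suc i = {}" using IH \<open>\<rho> \<in> K\<close> by blast
      then show False using \<rho>(2) x(2) stage by blast
    qed
  qed (rule x(1))
  then show False
    using coreference_lower_regular(2)[OF \<sigma>\<tau>(1) assms(4)] unfolding lin_ext_def by auto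
qed

lemma coreference_disjoint_stage:
  assumes "i < length W" "\<rho> \<in> K" "\<rho> \<notin> W ! i"
  shows "f \<rho> \<inter> W ! i = {}"
proof -
  have "i \<le> length W - 1" using assms(1) by simp
  then show ?thesis
    using assms(2,3)
  proof (induction arbitrary: \<rho> rule: inc_induct)
    case base
    then show ?case using stage_last by simp
  next
    case (step n)
    then have i: "Suc n < length W" by simp
    have old: "f \<rho> \<inter> W ! n = {}" if "\<rho> \<notin> W ! Suc n"
      using step.IH[OF step.prems(1) that] stage_subset_Suc[OF i] by blast
    show ?case
      using i
    proof (cases rule: morse_step_cases)
      case (expansion \<sigma> \<tau>)
      then consider "\<rho> \<notin> W ! Suc n" | "\<rho> = \<sigma>" | "\<rho> = \<tau>"
        using step.prems(2) by blast
      then show ?thesis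
        using old coreference_lower_regular(1)[OF free_pair_stage(1)[OF i expansion(1)] expansion(3)]
          coreference_free_coface_disjoint[OF i expansion(1,2,3) step.IH] by cases simp_all
    next
      case (filling \<nu>)
      then have "\<rho> \<notin> W ! Suc n \<or> \<rho> = \<nu>"
        using step.prems(2) by blast
      then show ?thesis
        using old coreference_critical[OF step.prems(1)] filling(3) step.prems(2) by auto
    qed
  qed
qed

lemma coreference_kernel_avoids_critical_facet:
  assumes i: "Suc i < length W" and stage: "W ! i = W ! Suc i - {\<nu>}"
    and \<nu>: "\<nu> \<in> W ! Suc i" "critical W \<nu>"
    and w: "w \<subseteq> K" "w \<inter> W ! i = {}" "lin_ext f w = {}"
  shows "\<nu> \<notin> w"
proof
  assume "\<nu> \<in> w"
  have "odd (card {\<rho> \<in> w. \<nu> \<in> f \<rho>})"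
  proof (rule odd_card_filter_unique[of \<nu>])
    show "\<nu> \<in> f \<nu>" using coreference_critical \<nu>(2) \<open>\<nu> \<in> w\<close> w(1) by auto
  next
    fix \<rho> assume \<rho>: "\<rho> \<in> w" "\<nu> \<in> f \<rho>"
    show "\<rho> = \<nu>"
    proof (rule ccontr)
      assume "\<rho> \<noteq> \<nu>"
      then have "\<rho> \<notin> W ! Suc i" using \<rho>(1) w(2) stage by blast
      then have "f \<rho> \<inter> W ! Suc i = {}"
        using coreference_disjoint_stage[OF i] \<rho>(1) w(1) by blast
      then show False using \<rho>(2) \<nu>(1) by blast
    qed
  qed fact
  then show False using w(3) unfolding lin_ext_def by auto
qed

lemma cocycle_add_cobd_lower_regular:
  assumes w: "w \<in> cocycles K (Suc q)" "lin_ext f w = {}"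
    and \<sigma>: "\<sigma> \<in> simplices K q" "lower_regular W \<sigma>"
  shows "chain_add w (cobd K q {\<sigma>}) \<in> cocycles K (Suc q)"
    and "lin_ext f (chain_add w (cobd K q {\<sigma>})) = {}"
proof -
  have cobd\<sigma>: "cobd K q {\<sigma>} \<in> cocycles K (Suc q)"
    using cobd_singleton_in_cocycles[OF complex \<sigma>(1)] .
  then show "chain_add w (cobd K q {\<sigma>}) \<in> cocycles K (Suc q)"
    using cocycles_chain_add[OF finite_complex w(1)] by blast
  have "lin_ext f (cobd K q {\<sigma>}) = {}"
    using coreference_lower_regular(2)[of \<sigma>] \<sigma> unfolding simplices_def by simp
  moreover have "finite w" "finite (cobd K q {\<sigma>})"
    using w(1) cobd\<sigma> finite_simplices_subset[OF finite_complex] unfolding cocycles_def by blast+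
  ultimately show "lin_ext f (chain_add w (cobd K q {\<sigma>})) = {}"
    using w(2) by (simp add: lin_ext_chain_add)
qed

lemma cocycle_cohomologous_off_next_stage:
  assumes i: "Suc i < length W" and w: "w \<in> cocycles K p" "lin_ext f w = {}" "w \<inter> W ! i = {}"
  obtains w' where "w' \<in> cocycles K p" "lin_ext f w' = {}" "w' \<inter> W ! Suc i = {}"
    "chain_add w w' \<in> coboundaries K p"
  using i
proof (cases rule: morse_step_cases)
  case (filling \<nu>)
  have "w \<subseteq> K" using w(1) unfolding cocycles_def simplices_def by blast
  moreover have "\<nu> \<in> W ! Suc i" using filling(1) unfolding facet_def by blast
  ultimately have "w \<inter> W ! Suc i = {}"
    using coreference_kernel_avoids_critical_facet[OF i filling(2) _ filling(3) _ w(3,2)]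
      w(3) filling(2) by blast
  then show thesis using w(1,2) by (intro that[of w]) (simp_all add: empty_in_coboundaries)
next
  case (expansion \<sigma> \<tau>)
  note \<sigma>\<tau> = free_pair_stage[OF i expansion(1)]
  have "\<sigma> \<notin> w" using free_face_notin_cocycle[OF i expansion(1,2) w(1,3)] .
  show thesis
  proof (cases "\<tau> \<in> w")
    case False
    then have "w \<inter> W ! Suc i = {}" using w(3) expansion(2) \<open>\<sigma> \<notin> w\<close> by blast
    then show thesis using w(1,2) by (intro that[of w]) (simp_all add: empty_in_coboundaries)
  next
    case True
    define q where "q = card \<sigma> - 1"
    have "card \<tau> = p + 1" using True w(1) unfolding cocycles_def simplices_def by auto
    then have q: "p = Suc q" "\<sigma> \<in> simplices K q"
      using \<sigma>\<tau>(1,4) card_simplex_pos[OF \<sigma>\<tau>(1)] unfolding q_def simplices_def by auto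
    have "chain_add w (cobd K q {\<sigma>}) \<inter> W ! Suc i = {}"
      using cobd_free_face_support[OF i expansion(1,2) q(2) w(3) \<open>\<sigma> \<notin> w\<close> True] .
    moreover have "chain_add w (chain_add w (cobd K q {\<sigma>})) \<in> coboundaries K p"
      using cobd_singleton_in_coboundaries[OF q(2)] q(1) by (simp add: chain_add_cancel_left)
    ultimately show thesis
      using that cocycle_add_cobd_lower_regular[OF w(1,2)[unfolded q(1)] q(2) expansion(3)] q(1)
      by blast
  qed
qed

lemma cocycle_off_stage_is_coboundary:
  assumes "i < length W" "w \<in> cocycles K p" "lin_ext f w = {}" "w \<inter> W ! i = {}"
  shows "w \<in> coboundaries K p"
proof -
  have "i \<le> length W - 1" using assms(1) by simp
  then show ?thesis
    using assms(2-4)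
  proof (induction arbitrary: w rule: inc_induct)
    case base
    then have "w = {}" using stage_last unfolding cocycles_def simplices_def by auto
    then show ?case using empty_in_coboundaries by simp
  next
    case (step n)
    then have i: "Suc n < length W" by simp
    obtain w' where w': "w' \<in> cocycles K p" "lin_ext f w' = {}" "w' \<inter> W ! Suc n = {}"
      and cohomologous: "chain_add w w' \<in> coboundaries K p"
      using cocycle_cohomologous_off_next_stage[OF i step.prems] .
    have "w' \<in> coboundaries K p" using step.IH[OF w'] .
    with cohomologous show ?case
      using coboundaries_chain_add[OF finite_complex] chain_add_cancel_right by metis
  qed
qed

lemma cocycles_with_equal_coreference_cohomologous:
  assumes "z \<in> cocycles K p" "z' \<in> cocycles K p" "lin_ext f z = lin_ext f z'"
  shows "chain_add z z' \<in> coboundaries K p"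
proof (rule cocycle_off_stage_is_coboundary[of 0])
  show "chain_add z z' \<in> cocycles K p"
    using cocycles_chain_add[OF finite_complex assms(1,2)] .
  have "finite z" "finite z'"
    using assms(1,2) finite_simplices_subset[OF finite_complex] unfolding cocycles_def by blast+
  then show "lin_ext f (chain_add z z') = {}"
    using assms(3) by (simp add: lin_ext_chain_add)
qed (use length_pos stage_first in simp_all)

end

end

theorem theorem8:
  fixes K :: "'a set set" and W :: "'a set set list"
    and r c :: "'a set \<Rightarrow> 'a set set"
  assumes "simplicial_complex K"
    and "morse_seq K W"
    and "is_reference_map K W r"
    and "is_coreference_map K W c"
  shows "(\<forall>p z z'. z \<in> cycles K p \<and> z' \<in> cycles K p \<and> lin_ext r z = lin_ext r z'
            \<longrightarrow> chain_add z z' \<in> boundaries K p)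
       \<and> (\<forall>p z z'. z \<in> cocycles K p \<and> z' \<in> cocycles K p \<and> lin_ext c z = lin_ext c z'
            \<longrightarrow> chain_add z z' \<in> coboundaries K p)"
proof -
  interpret morse_sequence K W
    using assms(1,2) by unfold_locales
  show ?thesis
    using cycles_with_equal_reference_homologous[OF assms(3)]
      cocycles_with_equal_coreference_cohomologous[OF assms(4)] by blast
qed

end
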